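(* Let $\varphi\in\mathbb{R}$, let $N$ be a positive integer, and let $N_x,N_y\in\{0,1,\dots,N\}$ satisfy $$\Big|\frac{N_x}{N}-\frac{1+\cos(2\pi\varphi)}{2}\Big|\le 0.306,\qquad \Big|\frac{N_y}{N}-\frac{1+\sin(2\pi\varphi)}{2}\Big|\le 0.306.$$ Put $t=\frac{1}{2\pi}\big(\mathrm{atan2}(2N_y/N-1,\,2N_x/N-1)\big)_{\mathrm{mod}\,2\pi}\in[0,1)$ and $x=(t-1/6)_{\mathrm{mod}\,1}$. Then $(\varphi)_{\mathrm{mod}\,1}$ lies in the open arc $(x,x+1/3)$ on the circle of unit circumference, i.e. $\big((\varphi)_{\mathrm{mod}\,1}-x\big)_{\mathrm{mod}\,1}\in(0,1/3)$.
   Context: $(a)_{\mathrm{mod}\,c}$ denotes the representative of $a$ in $[0,c)$. $\mathrm{atan2}(y,x)$ is the standard two-argument arctangent, the polar angle of the point $(x,y)\ne(0,0)$. *)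

theory Defs
  imports "HOL-Analysis.Analysis" "HOL-Complex_Analysis.Complex_Analysis"
begin

text \<open>Standard two-argument arctangent: the polar angle of (x,y) in (-pi,pi];
  by convention atan2 0 0 = 0.\<close>
definition atan2 :: "real \<Rightarrow> real \<Rightarrow> real" where
  "atan2 y x = Arg (Complex x y)"

definition rmod :: "real \<Rightarrow> real \<Rightarrow> real" where
  "rmod a c = a - c * of_int \<lfloor>a / c\<rfloor>"

end

theory Submission
  imports Defs
begin

text \<open>The point \<open>z = (2N\<^sub>x/N - 1, 2N\<^sub>y/N - 1)\<close> differs from \<open>e = cis (2\<pi>\<phi>)\<close> by at most
  \<open>0.612\<close> in each coordinate, so \<open>|z - e|\<^sup>2 \<le> 2 \<cdot> 0.612\<^sup>2 < 3/4\<close>. For a unit vector \<open>e\<close> this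
  forces \<open>\<langle>z, e\<rangle> > |z|/2\<close>, i.e. the angle between \<open>z\<close> and \<open>e\<close> is less than \<open>\<pi>/3\<close>.
  Hence \<open>t\<close> and \<open>\<phi>\<close> are less than \<open>1/6\<close> of a turn apart on the circle, so \<open>\<phi>\<close> lies in the
  arc of length \<open>1/3\<close> centred at \<open>t\<close>.\<close>

lemma norm_less_twice_inner_unit:
  fixes x e :: "'a::real_inner"
  assumes "norm e = 1" and "norm (x - e) < sqrt 3 / 2"
  shows "norm x < 2 * inner x e"
proof -
  define d where "d = x - e"
  define a where "a = inner d e"
  have "(norm d)\<^sup>2 < (sqrt 3 / 2)\<^sup>2"
    using assms(2) unfolding d_def by (intro power_strict_mono) auto
  then have d2: "(norm d)\<^sup>2 < 3/4"
    by (simp add: power_divide)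
  have a_le: "\<bar>a\<bar> \<le> norm d"
    using Cauchy_Schwarz_ineq2[of d e] assms(1) unfolding a_def by simp
  have ee: "inner e e = 1" using power2_norm_eq_inner[of e] assms(1) by simp
  have inner_x: "inner x e = 1 + a"
    unfolding a_def d_def by (simp add: inner_diff_left ee)
  have norm_x: "(norm x)\<^sup>2 = 1 + 2 * a + (norm d)\<^sup>2"
    unfolding a_def d_def
    by (simp add: power2_norm_eq_inner inner_diff_left inner_diff_right inner_commute ee)
  have "a\<^sup>2 \<le> (norm d)\<^sup>2"
    using a_le by (metis abs_ge_zero power2_abs power_mono)
  then have "\<bar>a\<bar> < 1"
    using d2 abs_square_less_1[of a] by linarith
  then have a_gt: "a > -1"
    by simp
  have "(2 * inner x e)\<^sup>2 - (norm x)\<^sup>2 = (2 * a + 3/2)\<^sup>2 + (3/4 - (norm d)\<^sup>2)"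
    unfolding norm_x inner_x by (simp add: power2_eq_square algebra_simps)
  then have "(norm x)\<^sup>2 < (2 * inner x e)\<^sup>2"
    using d2 zero_le_power2[of "2 * a + 3/2"] by linarith
  moreover have "0 \<le> 2 * inner x e" using a_gt inner_x by simp
  ultimately show ?thesis by (rule power2_less_imp_less)
qed

lemma cos_Arg_diff_gt_half:
  assumes "cmod (z - cis \<theta>) < sqrt 3 / 2"
  shows "cos (Arg z - \<theta>) > 1/2"
proof -
  have "inner z (cis \<theta>) = cmod z * cos (Arg z - \<theta>)"
    by (subst (1) rcis_cmod_Arg[symmetric])
       (simp add: inner_complex_def rcis_def cos_diff algebra_simps)
  then have "cmod z * 1 < cmod z * (2 * cos (Arg z - \<theta>))"
    using norm_less_twice_inner_unit[OF _ assms] by simp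
  then have "1 < 2 * cos (Arg z - \<theta>)"
    by (rule mult_left_less_imp_less) simp
  then show ?thesis by simp
qed

lemma cos_gt_half_imp_near_multiple_2pi:
  assumes "cos d > 1/2"
  obtains m :: int where "\<bar>d - 2 * pi * m\<bar> < pi / 3"
proof -
  define m where "m = \<lfloor>d / (2 * pi) + 1/2\<rfloor>"
  define e where "e = d - 2 * pi * m"
  have "m \<le> d / (2 * pi) + 1/2" "d / (2 * pi) + 1/2 < m + 1"
    unfolding m_def by linarith+
  then have "\<bar>e\<bar> \<le> pi"
    unfolding e_def using pi_gt_zero by (simp add: field_simps)
  moreover have "cos \<bar>e\<bar> > cos (pi / 3)"
    using assms unfolding e_def by (simp add: cos_diff cos_60)
  ultimately have "\<bar>e\<bar> < pi / 3"
    using cos_monotone_0_pi_le[of "pi / 3" "\<bar>e\<bar>"] by fastforce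
  then show thesis using that e_def by blast
qed

lemma cmod_le_sqrt2_mult:
  assumes "\<bar>Re w\<bar> \<le> c" and "\<bar>Im w\<bar> \<le> c"
  shows "cmod w \<le> sqrt 2 * c"
proof -
  have "\<bar>c\<bar> = c" using assms by simp
  then have "(Re w)\<^sup>2 \<le> c\<^sup>2" "(Im w)\<^sup>2 \<le> c\<^sup>2"
    using assms abs_le_square_iff[of "Re w" c] abs_le_square_iff[of "Im w" c] by simp_all
  then have "cmod w \<le> sqrt (2 * c\<^sup>2)"
    unfolding cmod_def by (intro real_sqrt_le_mono) simp
  also have "\<dots> = sqrt 2 * c"
    using \<open>\<bar>c\<bar> = c\<close> by (simp add: real_sqrt_mult)
  finally show ?thesis .
qed

lemma cmod_frequency_point_minus_cis_less:
  fixes px py \<theta> :: real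
  assumes "\<bar>px - (1 + cos \<theta>) / 2\<bar> \<le> 0.306" and "\<bar>py - (1 + sin \<theta>) / 2\<bar> \<le> 0.306"
  shows "cmod (Complex (2 * px - 1) (2 * py - 1) - cis \<theta>) < sqrt 3 / 2"
proof -
  have "Re (Complex (2 * px - 1) (2 * py - 1) - cis \<theta>) = 2 * (px - (1 + cos \<theta>) / 2)"
    and "Im (Complex (2 * px - 1) (2 * py - 1) - cis \<theta>) = 2 * (py - (1 + sin \<theta>) / 2)"
    by (simp_all add: algebra_simps)
  then have "cmod (Complex (2 * px - 1) (2 * py - 1) - cis \<theta>) \<le> sqrt 2 * 0.612"
    using assms by (intro cmod_le_sqrt2_mult) (simp_all only: abs_mult, simp_all)
  also have "\<dots> = sqrt (2 * 0.612\<^sup>2)"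
    by (simp add: real_sqrt_mult)
  also have "\<dots> < sqrt (3 / 4)"
    by (rule real_sqrt_less_mono) (simp add: power2_eq_square)
  also have "\<dots> = sqrt 3 / 2"
    by (simp add: real_sqrt_divide)
  finally show ?thesis .
qed

lemma rmod_1_eq: "rmod a 1 = a - \<lfloor>a\<rfloor>"
  by (simp add: rmod_def)

lemma rmod_divide: "c > 0 \<Longrightarrow> rmod a c / c = rmod (a / c) 1"
  by (simp add: rmod_def field_simps)

lemma rmod_1_add_int: "0 \<le> b \<Longrightarrow> b < 1 \<Longrightarrow> rmod (b + of_int k) 1 = b"
  by (simp add: rmod_1_eq floor_unique)

lemma in_arc_of_near:
  fixes s \<phi> :: real and m :: int
  assumes "\<bar>s - \<phi> - m\<bar> < 1/6"
  shows "0 < rmod (rmod \<phi> 1 - rmod (rmod s 1 - 1/6) 1) 1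
       \<and> rmod (rmod \<phi> 1 - rmod (rmod s 1 - 1/6) 1) 1 < 1/3"
proof -
  have "rmod \<phi> 1 - rmod (rmod s 1 - 1/6) 1
      = (1/6 - (s - \<phi> - m)) + of_int (\<lfloor>s\<rfloor> + \<lfloor>rmod s 1 - 1/6\<rfloor> - m - \<lfloor>\<phi>\<rfloor>)"
    by (simp add: rmod_1_eq)
  also have "rmod \<dots> 1 = 1/6 - (s - \<phi> - m)"
    using assms unfolding abs_less_iff by (intro rmod_1_add_int) linarith+
  finally show ?thesis using assms unfolding abs_less_iff by linarith
qed

theorem mainTheorem2:
  fixes \<phi> :: real and N Nx Ny :: nat
  assumes "N > 0" and "Nx \<le> N" and "Ny \<le> N"
    and "\<bar>real Nx / real N - (1 + cos (2 * pi * \<phi>)) / 2\<bar> \<le> 0.306"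
    and "\<bar>real Ny / real N - (1 + sin (2 * pi * \<phi>)) / 2\<bar> \<le> 0.306"
  shows "let t = rmod (atan2 (2 * real Ny / real N - 1) (2 * real Nx / real N - 1)) (2 * pi) / (2 * pi);
             x = rmod (t - 1/6) 1
         in 0 < rmod (rmod \<phi> 1 - x) 1 \<and> rmod (rmod \<phi> 1 - x) 1 < 1/3"
proof -
  define z where "z = Complex (2 * real Nx / real N - 1) (2 * real Ny / real N - 1)"
  have "cmod (z - cis (2 * pi * \<phi>)) < sqrt 3 / 2"
    using cmod_frequency_point_minus_cis_less[OF assms(4,5)] by (simp add: z_def)
  then have "cos (Arg z - 2 * pi * \<phi>) > 1/2"
    by (rule cos_Arg_diff_gt_half)
  then obtain m :: int where "\<bar>Arg z - 2 * pi * \<phi> - 2 * pi * m\<bar> < pi / 3"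
    by (rule cos_gt_half_imp_near_multiple_2pi)
  then have "\<bar>Arg z / (2 * pi) - \<phi> - m\<bar> < 1/6"
    using pi_gt_zero by (simp add: field_simps abs_less_iff)
  then show ?thesis
    using in_arc_of_near by (simp add: Let_def atan2_def z_def rmod_divide)
qed

end
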